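(* Let $r,t$ be integers with $2\le r\le t\le 2r$, let $\alpha=2^r-1$, $\beta=2^{t-1}-2^{r-1}$, and let $\mathcal{C}\subseteq\mathbb{Z}_2^\alpha\times\mathbb{Z}_4^\beta$ be a $\mathbb{Z}_2\mathbb{Z}_4$-additive 1-perfect code. If $\mathcal{C}$ is $\mathbb{Z}_2\mathbb{Z}_4$-cyclic, then $t=r$ or $t=2r$.
   Context: A $\mathbb{Z}_2\mathbb{Z}_4$-additive code is an additive subgroup of $\mathbb{Z}_2^\alpha\times\mathbb{Z}_4^\beta$; vectors are $(u\mid u')$ with $u\in\mathbb{Z}_2^\alpha$, $u'\in\mathbb{Z}_4^\beta$. The Gray map $\phi:\mathbb{Z}_4\to\mathbb{Z}_2^2$ is $0\mapsto(0,0),1\mapsto(0,1),2\mapsto(1,1),3\mapsto(1,0)$, and $\Phi(u\mid u')=(u\mid\phi(u'_1),\dots,\phi(u'_\beta))$. A binary code $C\subseteq\mathbb{Z}_2^n$ is 1-perfect if the Hamming balls of radius 1 around its codewords partition $\mathbb{Z}_2^n$; a $\mathbb{Z}_2\mathbb{Z}_4$-additive code is 1-perfect if its Gray image is. With $\sigma(v_1,\dots,v_m)=(v_m,v_1,\dots,v_{m-1})$ and $\sigma(u\mid u')=(\sigma(u)\mid\sigma(u'))$, a code is $\mathbb{Z}_2\mathbb{Z}_4$-cyclic if it is closed under $\sigma$. *)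

theory Defs
  imports Main "HOL-Library.Numeral_Type"
begin

text \<open>Z2 is the type 2, Z4 is the type 4 (residue rings from Numeral_Type).
  A vector of Z2^alpha x Z4^beta is a pair (u, u') of lists of lengths alpha, beta.\<close>

type_synonym z2z4vec = "2 list \<times> 4 list"

definition z2z4_space :: "nat \<Rightarrow> nat \<Rightarrow> z2z4vec set" where
  "z2z4_space \<alpha> \<beta> = {(u, u'). length u = \<alpha> \<and> length u' = \<beta>}"

definition vadd :: "z2z4vec \<Rightarrow> z2z4vec \<Rightarrow> z2z4vec" where
  "vadd x y = (map2 (+) (fst x) (fst y), map2 (+) (snd x) (snd y))"

definition vneg :: "z2z4vec \<Rightarrow> z2z4vec" where
  "vneg x = (map uminus (fst x), map uminus (snd x))"

definition vzero :: "nat \<Rightarrow> nat \<Rightarrow> z2z4vec" where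
  "vzero \<alpha> \<beta> = (replicate \<alpha> 0, replicate \<beta> 0)"

definition z2z4_additive :: "nat \<Rightarrow> nat \<Rightarrow> z2z4vec set \<Rightarrow> bool" where
  "z2z4_additive \<alpha> \<beta> C \<longleftrightarrow> C \<subseteq> z2z4_space \<alpha> \<beta> \<and> vzero \<alpha> \<beta> \<in> C \<and>
     (\<forall>x\<in>C. \<forall>y\<in>C. vadd x y \<in> C) \<and> (\<forall>x\<in>C. vneg x \<in> C)"

definition gray :: "4 \<Rightarrow> 2 list" where
  "gray a = (if a = 0 then [0, 0] else if a = 1 then [0, 1]
             else if a = 2 then [1, 1] else [1, 0])"

definition Gray_Phi :: "z2z4vec \<Rightarrow> 2 list" where
  "Gray_Phi x = fst x @ concat (map gray (snd x))"

definition hamming_dist :: "2 list \<Rightarrow> 2 list \<Rightarrow> nat" where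
  "hamming_dist x y = card {i. i < length x \<and> x ! i \<noteq> y ! i}"

definition one_perfect :: "nat \<Rightarrow> 2 list set \<Rightarrow> bool" where
  "one_perfect n D \<longleftrightarrow> D \<subseteq> {x. length x = n} \<and>
     (\<forall>x. length x = n \<longrightarrow> (\<exists>!c. c \<in> D \<and> hamming_dist c x \<le> 1))"

definition z2z4_one_perfect :: "nat \<Rightarrow> nat \<Rightarrow> z2z4vec set \<Rightarrow> bool" where
  "z2z4_one_perfect \<alpha> \<beta> C \<longleftrightarrow> one_perfect (\<alpha> + 2 * \<beta>) (Gray_Phi ` C)"

definition cshift :: "'a list \<Rightarrow> 'a list" where
  "cshift v = (if v = [] then [] else last v # butlast v)"

definition z2z4_sigma :: "z2z4vec \<Rightarrow> z2z4vec" where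
  "z2z4_sigma x = (cshift (fst x), cshift (snd x))"

definition z2z4_cyclic :: "z2z4vec set \<Rightarrow> bool" where
  "z2z4_cyclic C \<longleftrightarrow> (\<forall>x\<in>C. z2z4_sigma x \<in> C)"

end

theory Submission imports Defs "HOL-Number_Theory.Cong" begin

text \<open>
  Cover the word (0 | 2,0,...,0) by a codeword c. Doubling c kills its binary part, and
  the Gray distance of 2c from 0 is at most twice that of c from the covered word, hence
  at most 2; so 2c = 0, which forces c = (e_i | 2,0,...,0) for a binary unit vector e_i.
  Shifting c \<beta> times fixes the quaternary part and rotates e_i by \<beta>(\<alpha> - 1), giving a
  codeword at distance at most 2 from c; hence the two coincide and \<alpha> divides \<beta>. But
  \<beta> = 2^(r-1) (2^(t-r) - 1) with \<alpha> = 2^r - 1 odd and 0 < t - r < r makes this impossible.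
\<close>

lemma Z2_cases: "(a::2) = 0 \<or> a = 1"
proof (induct a)
  case (of_int z)
  then have "z = 0 \<or> z = 1" by auto
  then show ?case by auto
qed

lemma Z4_cases: "(a::4) = 0 \<or> a = 1 \<or> a = 2 \<or> a = 3"
proof (induct a)
  case (of_int z)
  then have "z = 0 \<or> z = 1 \<or> z = 2 \<or> z = 3" by auto
  then show ?case by auto
qed

lemma Z2_add_self [simp]: "(a::2) + a = 0"
  using Z2_cases[of a] by auto

subsection \<open>Hamming distance\<close>

lemma hamming_dist_conv_filter:
  "length x = length y \<Longrightarrow> hamming_dist x y = length (filter (\<lambda>(a, b). a \<noteq> b) (zip x y))"
  unfolding hamming_dist_def length_filter_conv_card
  by (rule arg_cong[where f = card]) auto

lemma hamming_dist_self [simp]: "hamming_dist x x = 0"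
  by (simp add: hamming_dist_def)

lemma hamming_dist_eq_0_iff:
  "length x = length y \<Longrightarrow> hamming_dist x y = 0 \<longleftrightarrow> x = y"
  by (auto simp: hamming_dist_def intro: nth_equalityI)

lemma hamming_dist_commute:
  "length x = length y \<Longrightarrow> hamming_dist x y = hamming_dist y x"
  unfolding hamming_dist_def by metis

lemma hamming_dist_append:
  "length x1 = length y1 \<Longrightarrow> length x2 = length y2 \<Longrightarrow>
   hamming_dist (x1 @ x2) (y1 @ y2) = hamming_dist x1 y1 + hamming_dist x2 y2"
  by (simp add: hamming_dist_conv_filter)

lemma hamming_dist_triangle:
  assumes "length x = length y" "length y = length z"
  shows "hamming_dist x z \<le> hamming_dist x y + hamming_dist y z"
  using assms by (induct x y z rule: list_induct3) (auto simp: hamming_dist_conv_filter)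

lemma zip_rotate: "length x = length y \<Longrightarrow> zip (rotate n x) (rotate n y) = rotate n (zip x y)"
  by (metis map_fst_zip map_snd_zip rotate_map zip_map_fst_snd)

lemma length_filter_rotate: "length (filter P (rotate n xs)) = length (filter P xs)"
  by (simp add: rotate_drop_take)
    (metis append_take_drop_id add.commute filter_append length_append)

lemma hamming_dist_rotate:
  "length x = length y \<Longrightarrow> hamming_dist (rotate n x) (rotate n y) = hamming_dist x y"
  by (simp add: hamming_dist_conv_filter zip_rotate length_filter_rotate)

lemma rotate_replicate: "rotate n (replicate m a) = replicate m a"
  by (rule nth_equalityI) (auto simp: nth_rotate)

lemma hamming_dist_unit_vector:
  assumes "i < n" "a \<noteq> b"
  shows "hamming_dist ((replicate n b)[i := a]) (replicate n b) = 1"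
proof -
  have "{k. k < length ((replicate n b)[i := a]) \<and> (replicate n b)[i := a] ! k \<noteq> replicate n b ! k} = {i}"
    using assms by (auto simp: nth_list_update)
  then show ?thesis by (simp add: hamming_dist_def)
qed

lemma hamming_dist_zero_eq_1_imp_unit_vector:
  assumes "length u = n" "hamming_dist u (replicate n (0::2)) = 1"
  obtains i where "i < n" "u = (replicate n 0)[i := 1]"
proof -
  have "{k. k < n \<and> u ! k \<noteq> replicate n 0 ! k} = {k. k < n \<and> u ! k \<noteq> 0}"
    by auto
  then have "card {k. k < n \<and> u ! k \<noteq> 0} = 1"
    using assms by (simp add: hamming_dist_def)
  then obtain i where i: "{k. k < n \<and> u ! k \<noteq> 0} = {i}" by (rule card_1_singletonE)
  then have "i < n" and ui: "u ! i = 1" and uk: "\<And>k. k < n \<Longrightarrow> k \<noteq> i \<Longrightarrow> u ! k = 0"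
    using Z2_cases[of "u ! i"] by blast+
  have "u = (replicate n 0)[i := 1]"
  proof (rule nth_equalityI)
    fix k assume "k < length u"
    then show "u ! k = (replicate n 0)[i := 1] ! k"
      using ui uk assms(1) by (cases "k = i") simp_all
  qed (simp add: assms(1))
  with \<open>i < n\<close> show ?thesis by (rule that)
qed

lemma rotate_fixes_unit_vector_imp_dvd:
  assumes "i < n" "a \<noteq> b" "rotate s ((replicate n b)[i := a]) = (replicate n b)[i := a]"
  shows "n dvd s"
proof -
  have a: "((replicate n b)[i := a]) ! ((s + i) mod n) = a"
    using arg_cong[where f = "\<lambda>v. v ! i", OF assms(3)] assms(1) by (simp add: nth_rotate)
  have "(s + i) mod n = i"
  proof (rule ccontr)
    assume "(s + i) mod n \<noteq> i"
    moreover have "(s + i) mod n < n" using assms(1) by simp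
    ultimately have "((replicate n b)[i := a]) ! ((s + i) mod n) = b" by simp
    with a assms(2) show False by simp
  qed
  then show ?thesis by (metis dvd_minus_mod add_diff_cancel_right')
qed

lemma one_perfect_min_dist:
  assumes perf: "one_perfect n D" and "a \<in> D" "b \<in> D" "hamming_dist a b < 3"
  shows "a = b"
proof (rule ccontr)
  assume "a \<noteq> b"
  have la: "length a = n" and lb: "length b = n"
    using perf assms(2,3) by (auto simp: one_perfect_def)
  define S where "S = {i. i < length a \<and> a ! i \<noteq> b ! i}"
  have "S \<noteq> {}" using \<open>a \<noteq> b\<close> la lb by (auto simp: S_def intro: nth_equalityI)
  then obtain k where k: "k \<in> S" by blast
  \<comment> \<open>The word half-way between a and b lies in both radius-1 balls.\<close>
  define z where "z = a[k := b ! k]"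
  have "{i. i < length a \<and> a ! i \<noteq> z ! i} = {k}"
    using k by (auto simp: z_def S_def nth_list_update)
  then have az: "hamming_dist a z \<le> 1" by (simp add: hamming_dist_def)
  have "{i. i < length b \<and> b ! i \<noteq> z ! i} = S - {k}"
    using k la lb by (auto simp: z_def S_def nth_list_update)
  then have "hamming_dist b z = card S - 1"
    using k by (simp add: hamming_dist_def S_def)
  moreover have "card S = hamming_dist a b" by (simp add: S_def hamming_dist_def)
  ultimately have bz: "hamming_dist b z \<le> 1" using assms(4) by simp
  have "length z = n" using la by (simp add: z_def)
  then have "\<exists>!c. c \<in> D \<and> hamming_dist c z \<le> 1" using perf by (simp add: one_perfect_def)
  then show False using assms(2,3) az bz \<open>a \<noteq> b\<close> by auto
qed

subsection \<open>Lee weight and the Gray map\<close>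

definition lee_weight :: "4 \<Rightarrow> nat" where
  "lee_weight a = (if a = 0 then 0 else if a = 2 then 2 else 1)"

lemma lee_weight_eq_0_iff [simp]: "lee_weight a = 0 \<longleftrightarrow> a = 0"
  by (simp add: lee_weight_def)

lemma lee_weight_double_le: "2 * b = 0 \<Longrightarrow> lee_weight (2 * a) \<le> 2 * lee_weight (a - b)"
  using Z4_cases[of a] Z4_cases[of b] by (auto simp: lee_weight_def)

lemma lee_weight_diff_of_order_2: "2 * a = 0 \<Longrightarrow> 2 * b = 0 \<Longrightarrow> lee_weight (a - b) \<noteq> 1"
  using Z4_cases[of a] Z4_cases[of b] by (auto simp: lee_weight_def)

lemma length_gray [simp]: "length (gray a) = 2"
  by (simp add: gray_def)

lemma length_concat_map_gray [simp]: "length (concat (map gray u)) = 2 * length u"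
  by (induct u) auto

lemma hamming_dist_gray: "hamming_dist (gray a) (gray b) = lee_weight (a - b)"
  using Z4_cases[of a] Z4_cases[of b]
  by (auto simp: hamming_dist_conv_filter gray_def lee_weight_def)

lemma hamming_dist_concat_map_gray:
  "length u = length v \<Longrightarrow>
   hamming_dist (concat (map gray u)) (concat (map gray v)) = (\<Sum>j<length u. lee_weight (u ! j - v ! j))"
proof (induct u v rule: list_induct2)
  case Nil
  then show ?case by simp
next
  case (Cons x xs y ys)
  then show ?case
    by (simp add: hamming_dist_append hamming_dist_gray sum.lessThan_Suc_shift del: sum.lessThan_Suc)
qed

lemma hamming_dist_Gray_Phi:
  assumes "x \<in> z2z4_space \<alpha> \<beta>" "y \<in> z2z4_space \<alpha> \<beta>"
  shows "hamming_dist (Gray_Phi x) (Gray_Phi y) =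
     hamming_dist (fst x) (fst y) + (\<Sum>j<\<beta>. lee_weight (snd x ! j - snd y ! j))"
  using assms by (auto simp: z2z4_space_def Gray_Phi_def hamming_dist_append hamming_dist_concat_map_gray)

lemma z2z4_one_perfect_min_dist:
  assumes "z2z4_one_perfect \<alpha> \<beta> C" "x \<in> C" "y \<in> C"
    and "hamming_dist (Gray_Phi x) (Gray_Phi y) < 3"
  shows "Gray_Phi x = Gray_Phi y"
  using assms one_perfect_min_dist[of "\<alpha> + 2 * \<beta>" "Gray_Phi ` C"]
  by (simp add: z2z4_one_perfect_def)

subsection \<open>Cyclic shifts\<close>

lemma cshift_eq_rotate: "cshift v = rotate (length v - 1) v"
proof (cases "v = []")
  case False
  show ?thesis
  proof (rule nth_equalityI)
    fix i assume "i < length (cshift v)"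
    then have i: "i < length v" using False by (simp add: cshift_def)
    show "cshift v ! i = rotate (length v - 1) v ! i"
    proof (cases i)
      case 0
      then show ?thesis using False i by (simp add: cshift_def nth_rotate last_conv_nth)
    next
      case (Suc j)
      then have "length v - 1 + i = length v + j" using i by simp
      then have "(length v - 1 + i) mod length v = j" using Suc i by simp
      then show ?thesis using False i Suc by (simp add: cshift_def nth_rotate nth_butlast)
    qed
  qed (simp add: cshift_def False)
qed (simp add: cshift_def)

lemma length_cshift [simp]: "length (cshift v) = length v"
  by (simp add: cshift_eq_rotate)

lemma funpow_cshift: "(cshift ^^ k) v = rotate (k * (length v - 1)) v"
  by (induct k) (simp_all add: cshift_eq_rotate rotate_rotate add.commute)

lemma funpow_z2z4_sigma: "(z2z4_sigma ^^ k) x = ((cshift ^^ k) (fst x), (cshift ^^ k) (snd x))"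
  by (induct k) (auto simp: z2z4_sigma_def)

lemma z2z4_cyclic_funpow: "z2z4_cyclic C \<Longrightarrow> x \<in> C \<Longrightarrow> (z2z4_sigma ^^ k) x \<in> C"
  by (induct k) (auto simp: z2z4_cyclic_def)

lemma z2z4_one_perfect_cover_two:
  assumes add: "z2z4_additive \<alpha> \<beta> C" and perf: "z2z4_one_perfect \<alpha> \<beta> C"
    and "0 < \<beta>" and cC: "c \<in> C"
    and cw: "hamming_dist (Gray_Phi c) (Gray_Phi (replicate \<alpha> 0, (replicate \<beta> 0)[0 := 2])) \<le> 1"
  shows "snd c = (replicate \<beta> 0)[0 := 2] \<and> hamming_dist (fst c) (replicate \<alpha> 0) \<le> 1"
proof -
  define w' :: "4 list" where "w' = (replicate \<beta> 0)[0 := 2]"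
  have w'_order_2: "2 * w' ! j = 0" if "j < \<beta>" for j
    using that by (auto simp: w'_def nth_list_update)
  have sub: "C \<subseteq> z2z4_space \<alpha> \<beta>" and zC: "vzero \<alpha> \<beta> \<in> C"
    using add by (auto simp: z2z4_additive_def)
  have cS: "c \<in> z2z4_space \<alpha> \<beta>" using cC sub by auto
  obtain u c' where c: "c = (u, c')" by fastforce
  have lu: "length u = \<alpha>" and lc: "length c' = \<beta>" using cS by (auto simp: c z2z4_space_def)
  have hw: "hamming_dist u (replicate \<alpha> 0) + (\<Sum>j<\<beta>. lee_weight (c' ! j - w' ! j)) \<le> 1"
    using cw hamming_dist_Gray_Phi[OF cS, of "(replicate \<alpha> 0, w')"]
    by (simp add: c w'_def z2z4_space_def)
  define d where "d = vadd c c"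
  have "d \<in> C" using add cC by (simp add: d_def z2z4_additive_def)
  then have dS: "d \<in> z2z4_space \<alpha> \<beta>" using sub by auto
  have d1: "fst d = replicate \<alpha> 0"
    by (rule nth_equalityI) (auto simp: d_def vadd_def c lu)
  have "hamming_dist (Gray_Phi d) (Gray_Phi (vzero \<alpha> \<beta>)) = (\<Sum>j<\<beta>. lee_weight (2 * c' ! j))"
    using hamming_dist_Gray_Phi[OF dS zC[THEN subsetD[OF sub]]] d1
    by (simp add: vzero_def d_def vadd_def c lc)
  also have "\<dots> \<le> (\<Sum>j<\<beta>. 2 * lee_weight (c' ! j - w' ! j))"
    by (rule sum_mono) (simp add: lee_weight_double_le w'_order_2)
  also have "\<dots> \<le> 2" using hw by (simp add: sum_distrib_left[symmetric])
  finally have "Gray_Phi d = Gray_Phi (vzero \<alpha> \<beta>)"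
    using z2z4_one_perfect_min_dist[OF perf \<open>d \<in> C\<close> zC] by simp
  then have "(\<Sum>j<\<beta>. lee_weight (2 * c' ! j)) = 0"
    using hamming_dist_Gray_Phi[OF dS zC[THEN subsetD[OF sub]]] d1
    by (simp add: vzero_def d_def vadd_def c lc)
  then have c'_order_2: "2 * c' ! j = 0" if "j < \<beta>" for j
    using that by simp
  have "c' ! j = w' ! j" if j: "j < \<beta>" for j
  proof -
    have "lee_weight (c' ! j - w' ! j) \<le> 1"
      using hw member_le_sum[of j "{..<\<beta>}" "\<lambda>j. lee_weight (c' ! j - w' ! j)"] j by simp
    then have "lee_weight (c' ! j - w' ! j) = 0"
      using lee_weight_diff_of_order_2[OF c'_order_2[OF j] w'_order_2[OF j]] by linarith
    then show ?thesis by simp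
  qed
  then have "c' = w'" by (intro nth_equalityI) (simp_all add: lc w'_def)
  then show ?thesis using hw by (simp add: c w'_def)
qed

lemma z2z4_one_perfect_unit_codeword:
  assumes add: "z2z4_additive \<alpha> \<beta> C" and perf: "z2z4_one_perfect \<alpha> \<beta> C" and "0 < \<beta>"
  shows "\<exists>i < \<alpha>. ((replicate \<alpha> 0)[i := 1], (replicate \<beta> 0)[0 := 2]) \<in> C"
proof -
  define w where "w = (replicate \<alpha> (0::2), (replicate \<beta> (0::4))[0 := 2])"
  have "length (Gray_Phi w) = \<alpha> + 2 * \<beta>" by (simp add: w_def Gray_Phi_def)
  then obtain c where cC: "c \<in> C" and cw: "hamming_dist (Gray_Phi c) (Gray_Phi w) \<le> 1"
    using perf by (auto simp: z2z4_one_perfect_def one_perfect_def)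
  have c: "snd c = snd w" and u: "hamming_dist (fst c) (replicate \<alpha> 0) \<le> 1"
    using z2z4_one_perfect_cover_two[OF add perf \<open>0 < \<beta>\<close> cC] cw by (simp_all add: w_def)
  have lu: "length (fst c) = \<alpha>" using add cC by (auto simp: z2z4_additive_def z2z4_space_def)
  have zC: "vzero \<alpha> \<beta> \<in> C" using add by (simp add: z2z4_additive_def)
  have "hamming_dist (fst c) (replicate \<alpha> 0) \<noteq> 0"
  proof
    assume "hamming_dist (fst c) (replicate \<alpha> 0) = 0"
    then have "c = w" using c lu by (simp add: hamming_dist_eq_0_iff prod_eq_iff w_def)
    moreover have w2: "hamming_dist (Gray_Phi w) (Gray_Phi (vzero \<alpha> \<beta>)) = 2"
    proof -
      obtain \<beta>' where \<beta>': "\<beta> = Suc \<beta>'" using \<open>0 < \<beta>\<close> by (cases \<beta>) auto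
      have "hamming_dist (Gray_Phi w) (Gray_Phi (vzero \<alpha> \<beta>)) = (\<Sum>j<\<beta>. lee_weight (snd w ! j))"
        using hamming_dist_Gray_Phi[of w \<alpha> \<beta> "vzero \<alpha> \<beta>"]
        by (simp add: w_def vzero_def z2z4_space_def)
      also have "\<dots> = 2"
        using \<beta>' by (simp only: sum.lessThan_Suc_shift) (simp add: w_def lee_weight_def nth_list_update)
      finally show ?thesis .
    qed
    ultimately have "Gray_Phi w = Gray_Phi (vzero \<alpha> \<beta>)"
      using z2z4_one_perfect_min_dist[OF perf cC zC] by simp
    with w2 show False by simp
  qed
  with u have "hamming_dist (fst c) (replicate \<alpha> 0) = 1" by linarith
  then obtain i where i: "i < \<alpha>" "fst c = (replicate \<alpha> 0)[i := 1]"
    by (rule hamming_dist_zero_eq_1_imp_unit_vector[OF lu])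
  have c_eq: "c = ((replicate \<alpha> 0)[i := 1], (replicate \<beta> 0)[0 := 2])"
    using i(2) c by (simp add: prod_eq_iff w_def)
  show ?thesis using cC i(1) unfolding c_eq by blast
qed

lemma z2z4_cyclic_one_perfect_unit_dvd:
  assumes sub: "C \<subseteq> z2z4_space \<alpha> \<beta>" and perf: "z2z4_one_perfect \<alpha> \<beta> C"
    and cyc: "z2z4_cyclic C" and "i < \<alpha>" and cC: "((replicate \<alpha> 0)[i := 1], v) \<in> C"
  shows "\<alpha> dvd \<beta>"
proof -
  define e :: "2 list" where "e = (replicate \<alpha> 0)[i := 1]"
  define s where "s = \<beta> * (\<alpha> - 1)"
  have lv: "length v = \<beta>" using cC sub by (auto simp: z2z4_space_def)
  \<comment> \<open>the shift by \<beta>(\<beta> - 1) of the quaternary part is a multiple of its length\<close>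
  have "(z2z4_sigma ^^ \<beta>) (e, v) = (rotate s e, v)"
    by (simp add: funpow_z2z4_sigma funpow_cshift e_def s_def lv rotate_conv_mod[of "\<beta> * (\<beta> - 1)"])
  then have rC: "(rotate s e, v) \<in> C" using z2z4_cyclic_funpow[OF cyc] cC e_def by metis
  have "hamming_dist (rotate s e) e \<le>
      hamming_dist (rotate s e) (rotate s (replicate \<alpha> 0)) + hamming_dist (replicate \<alpha> 0) e"
    using hamming_dist_triangle[of "rotate s e" "replicate \<alpha> 0" e] by (simp add: e_def rotate_replicate)
  also have "\<dots> = 2"
    using hamming_dist_unit_vector[OF \<open>i < \<alpha>\<close>, of "1::2" 0]
    by (simp add: hamming_dist_rotate hamming_dist_commute[of "replicate \<alpha> 0"] e_def)
  finally have "hamming_dist (Gray_Phi (rotate s e, v)) (Gray_Phi (e, v)) < 3"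
    by (simp add: Gray_Phi_def hamming_dist_append e_def)
  then have "hamming_dist (rotate s e) e = 0"
    using z2z4_one_perfect_min_dist[OF perf rC cC[folded e_def]]
    by (simp add: Gray_Phi_def hamming_dist_append)
  then have "rotate s e = e" by (simp add: hamming_dist_eq_0_iff)
  then have "\<alpha> dvd \<beta> * (\<alpha> - 1)"
    using rotate_fixes_unit_vector_imp_dvd[OF \<open>i < \<alpha>\<close>, of "1::2" 0] by (simp add: e_def s_def)
  moreover have "coprime \<alpha> (\<alpha> - 1)"
    using \<open>i < \<alpha>\<close> coprime_diff_one_right_nat[of \<alpha>] by simp
  ultimately show ?thesis by (metis coprime_dvd_mult_left_iff)
qed

lemma mersenne_not_dvd_pow2_mult:
  fixes k m r :: nat
  assumes "0 < m" "m < r"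
  shows "\<not> (2 ^ r - 1) dvd (2::nat) ^ k * (2 ^ m - 1)"
proof
  assume "(2 ^ r - 1) dvd (2::nat) ^ k * (2 ^ m - 1)"
  moreover have "coprime (2 ^ r - 1) ((2::nat) ^ k)"
    using assms by simp
  ultimately have "(2 ^ r - 1) dvd (2::nat) ^ m - 1" by (simp add: coprime_dvd_mult_right_iff)
  moreover have "(2::nat) ^ m - 1 > 0" using one_less_power[of "2::nat" m] assms by simp
  ultimately have "(2::nat) ^ r - 1 \<le> 2 ^ m - 1" by (rule dvd_imp_le)
  moreover have "(2::nat) ^ m < 2 ^ r" using assms by simp
  moreover have "(1::nat) \<le> 2 ^ m" by simp
  ultimately show False by linarith
qed

theorem proposition3p1:
  fixes r t :: nat and C :: "z2z4vec set"
  assumes "2 \<le> r" and "r \<le> t" and "t \<le> 2 * r"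
    and "z2z4_additive (2 ^ r - 1) (2 ^ (t - 1) - 2 ^ (r - 1)) C"
    and "z2z4_one_perfect (2 ^ r - 1) (2 ^ (t - 1) - 2 ^ (r - 1)) C"
    and "z2z4_cyclic C"
  shows "t = r \<or> t = 2 * r"
proof (rule ccontr)
  assume "\<not> (t = r \<or> t = 2 * r)"
  then have m: "0 < t - r" "t - r < r" using assms(2,3) by auto
  have "t - 1 = (r - 1) + (t - r)" using m assms(1) by simp
  then have \<beta>: "2 ^ (t - 1) - 2 ^ (r - 1) = 2 ^ (r - 1) * (2 ^ (t - r) - 1 :: nat)"
    by (simp add: power_add right_diff_distrib')
  then have "0 < (2::nat) ^ (t - 1) - 2 ^ (r - 1)" using one_less_power[of "2::nat" "t - r"] m by simp
  then obtain i where "i < 2 ^ r - 1"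
    "((replicate (2 ^ r - 1) 0)[i := 1], (replicate (2 ^ (t - 1) - 2 ^ (r - 1)) 0)[0 := 2]) \<in> C"
    using z2z4_one_perfect_unit_codeword[OF assms(4,5)] by blast
  then have "(2 ^ r - 1) dvd (2 ^ (t - 1) - 2 ^ (r - 1) :: nat)"
    using assms(4) by (intro z2z4_cyclic_one_perfect_unit_dvd[OF _ assms(5,6)])
      (auto simp: z2z4_additive_def)
  then show False using mersenne_not_dvd_pow2_mult[OF m] \<beta> by simp
qed

end
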